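(* Let $\lambda\in\Lambda$ (single-hop). For every $q\in\mathbb R_+^N$ and every $\kappa>0$, $\Delta(\kappa q)=\kappa\,\Delta(q)$.
   Context: Single-hop network with $N$ queues and finite $\mathcal S\subset\mathbb R_+^N$. $f:\mathbb R_+\to\mathbb R_+$ is differentiable, strictly increasing, $f(0)=0$, applied componentwise, and satisfies: for all $q\in\mathbb R_+^N$, $\pi\in\mathcal S$, if $\pi\cdot f(q)=\max_{\rho\in\mathcal S}\rho\cdot f(q)$ then $\pi\cdot f(\kappa q)=\max_{\rho\in\mathcal S}\rho\cdot f(\kappa q)$ for all $\kappa\ge0$. $L(q)=\sum_n\int_0^{q_n}f$. $\langle\mathcal S\rangle$ convex hull; $\Lambda=\{\lambda\in\mathbb R_+^N:\lambda\le\sigma$ for some $\sigma\in\langle\mathcal S\rangle\}$. $E$ = extreme points of $\{\xi\in\mathbb R_+^N:\max_\pi\xi\cdot\pi\le1\}$, $\mathcal S^*$ maximal elements of $E$, $\Xi(\lambda)=\{\xi\in\mathcal S^*:\xi\cdot\lambda=1\}$. $\Delta(q)$ is the unique minimizer of $L(r)$ over $r\in\mathbb R_+^N$ subject to $\xi\cdot r\ge\xi\cdot q$ for all $\xi\in\Xi(\lambda)$ and $r_n\le q_n$ for all $n$ with $\lambda_n=0$. *)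

theory Defs
  imports "HOL-Analysis.Analysis"
begin

definition nonneg_vec :: "real^'n \<Rightarrow> bool" where
  "nonneg_vec x \<longleftrightarrow> (\<forall>i. 0 \<le> x $ i)"

definition vle :: "real^'n \<Rightarrow> real^'n \<Rightarrow> bool" where
  "vle x y \<longleftrightarrow> (\<forall>i. x $ i \<le> y $ i)"

definition fvec :: "(real \<Rightarrow> real) \<Rightarrow> real^'n \<Rightarrow> real^'n" where
  "fvec f q = (\<chi> i. f (q $ i))"

definition admissible_f :: "(real \<Rightarrow> real) \<Rightarrow> (real^'n) set \<Rightarrow> bool" where
  "admissible_f f S \<longleftrightarrow>
     (\<forall>x\<ge>0. f differentiable (at x within {0..})) \<and>
     strict_mono_on {0..} f \<and> f 0 = 0 \<and>
     (\<forall>q \<pi>. nonneg_vec q \<longrightarrow> \<pi> \<in> S \<longrightarrow>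
        (\<forall>\<rho>\<in>S. \<rho> \<bullet> fvec f q \<le> \<pi> \<bullet> fvec f q) \<longrightarrow>
        (\<forall>\<kappa>\<ge>0. \<forall>\<rho>\<in>S. \<rho> \<bullet> fvec f (\<kappa> *\<^sub>R q) \<le> \<pi> \<bullet> fvec f (\<kappa> *\<^sub>R q)))"

definition Lfun :: "(real \<Rightarrow> real) \<Rightarrow> real^'n \<Rightarrow> real" where
  "Lfun f q = (\<Sum>n\<in>UNIV. integral {0..q $ n} f)"

definition Lambda :: "(real^'n) set \<Rightarrow> (real^'n) set" where
  "Lambda S = {lam. nonneg_vec lam \<and> (\<exists>\<sigma>\<in>convex hull S. vle lam \<sigma>)}"

definition dual_poly :: "(real^'n) set \<Rightarrow> (real^'n) set" where
  "dual_poly S = {\<xi>. nonneg_vec \<xi> \<and> (\<forall>\<pi>\<in>S. \<xi> \<bullet> \<pi> \<le> 1)}"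

definition Eset :: "(real^'n) set \<Rightarrow> (real^'n) set" where
  "Eset S = {\<xi>. \<xi> extreme_point_of dual_poly S}"

definition Sstar :: "(real^'n) set \<Rightarrow> (real^'n) set" where
  "Sstar S = {\<xi>\<in>Eset S. \<not> (\<exists>\<xi>'\<in>Eset S. vle \<xi> \<xi>' \<and> \<xi>' \<noteq> \<xi>)}"

definition Xi :: "(real^'n) set \<Rightarrow> real^'n \<Rightarrow> (real^'n) set" where
  "Xi S lam = {\<xi>\<in>Sstar S. \<xi> \<bullet> lam = 1}"

definition Dfeas :: "(real^'n) set \<Rightarrow> real^'n \<Rightarrow> real^'n \<Rightarrow> (real^'n) set" where
  "Dfeas S lam q = {r. nonneg_vec r \<and> (\<forall>\<xi>\<in>Xi S lam. \<xi> \<bullet> r \<ge> \<xi> \<bullet> q)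
                    \<and> (\<forall>n. lam $ n = 0 \<longrightarrow> r $ n \<le> q $ n)}"

definition Delta :: "(real \<Rightarrow> real) \<Rightarrow> (real^'n) set \<Rightarrow> real^'n \<Rightarrow> real^'n \<Rightarrow> real^'n" where
  "Delta f S lam q = (THE r. r \<in> Dfeas S lam q \<and> (\<forall>r'\<in>Dfeas S lam q. Lfun f r \<le> Lfun f r'))"

end

theory Submission
  imports Defs
begin

(* Delta(q) minimises the strictly convex potential L over the feasible set D(q), and
   D(kappa q) = kappa D(q).  Since L is not homogeneous, the point is to show that kappa r is
   optimal for D(kappa q) whenever r is optimal for D(q).  By convexity of L it suffices that
   w' = f(kappa r) satisfies the variational inequality  w' . (r' - r) >= 0  on D(q). *)

lemma inner_nonneg_vec: "nonneg_vec x \<Longrightarrow> nonneg_vec y \<Longrightarrow> 0 \<le> x \<bullet> (y::real^'n)"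
  by (simp add: inner_vec_def nonneg_vec_def sum_nonneg)

lemma inner_vle_mono: "nonneg_vec u \<Longrightarrow> vle x y \<Longrightarrow> u \<bullet> x \<le> u \<bullet> (y::real^'n)"
  by (auto simp: inner_vec_def nonneg_vec_def vle_def intro!: sum_mono mult_left_mono)

lemma inner_eq_0_coordinates:
  assumes "\<And>i. 0 \<le> x $ i * y $ i" "x \<bullet> (y::real^'n) = 0"
  shows "x $ i * y $ i = 0"
  using assms sum_nonneg_eq_0_iff[of UNIV "\<lambda>i. x $ i * y $ i"] by (auto simp: inner_vec_def)

lemma vle_iff_le: "vle x y \<longleftrightarrow> x \<le> (y::real^'n)"
  by (simp add: vle_def less_eq_vec_def)

lemma eventually_at_right_affine_pos:
  assumes "0 < a"
  shows "\<forall>\<^sub>F t in at_right (0::real). 0 < a + t * b"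
proof -
  have "((\<lambda>t. a + t * b) \<longlongrightarrow> a + 0 * b) (at_right 0)" by (intro tendsto_intros)
  then show ?thesis using assms by (auto dest: order_tendstoD(1))
qed

lemma small_step_nonneg:
  assumes "nonneg_vec r" "\<And>i. r $ i = 0 \<Longrightarrow> 0 \<le> d $ i"
  shows "\<exists>t>0. nonneg_vec (r + t *\<^sub>R (d::real^'n))"
proof -
  have "\<forall>\<^sub>F t in at_right (0::real). 0 < t \<and> (\<forall>i. 0 \<le> r $ i + t * d $ i)"
  proof (intro eventually_conj eventually_at_right_less eventually_all_finite allI)
    fix i
    show "\<forall>\<^sub>F t in at_right (0::real). 0 \<le> r $ i + t * d $ i"
    proof (cases "r $ i = 0")
      case True
      then show ?thesis using assms(2)
        by (intro eventually_mono[OF eventually_at_right_less]) simp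
    next
      case False
      then have "0 < r $ i" using assms(1) by (simp add: nonneg_vec_def less_le)
      then show ?thesis
        using eventually_at_right_affine_pos[of "r $ i" "d $ i"] by (auto elim: eventually_mono)
    qed
  qed
  then obtain t where "0 < t" "\<forall>i. 0 \<le> r $ i + t * d $ i"
    using eventually_happens[of _ "at_right (0::real)"] by auto
  then show ?thesis by (auto simp: nonneg_vec_def)
qed

section \<open>The potential L\<close>

definition L_argmin :: "(real \<Rightarrow> real) \<Rightarrow> (real^'n) set \<Rightarrow> real^'n \<Rightarrow> bool" where
  "L_argmin f C r \<longleftrightarrow> r \<in> C \<and> (\<forall>r'\<in>C. Lfun f r \<le> Lfun f r')"

locale cost_function =
  fixes f :: "real \<Rightarrow> real"
  assumes f_cont: "continuous_on {0..} f"
    and f_strict_mono: "strict_mono_on {0..} f"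
    and f_zero: "f 0 = 0"
begin

lemma f_less: "0 \<le> x \<Longrightarrow> x < y \<Longrightarrow> f x < f y"
  using f_strict_mono by (simp add: strict_mono_on_def)

lemma f_mono: "0 \<le> x \<Longrightarrow> x \<le> y \<Longrightarrow> f x \<le> f y"
  using f_less by (cases "x = y") (auto simp: less_eq_real_def)

lemma f_nonneg: "0 \<le> x \<Longrightarrow> 0 \<le> f x"
  using f_mono[of 0 x] f_zero by simp

lemma f_eq_0_iff: "0 \<le> x \<Longrightarrow> f x = 0 \<longleftrightarrow> x = 0"
  using f_less[of 0 x] f_zero by (cases "x = 0") auto

lemma f_integrable: "0 \<le> a \<Longrightarrow> f integrable_on {a..b}"
  by (intro integrable_continuous_interval continuous_on_subset[OF f_cont]) auto

definition F :: "real \<Rightarrow> real" where "F x = integral {0..x} f"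

lemma Lfun_eq: "Lfun f r = (\<Sum>i\<in>UNIV. F (r $ i))"
  by (simp add: Lfun_def F_def)

lemma F_cont: "continuous_on {0..M} F"
  unfolding F_def by (rule indefinite_integral_continuous_1[OF f_integrable[OF order_refl]])

lemma F_increment_bounds:
  assumes "0 \<le> x" "x \<le> y"
  shows "f x * (y - x) \<le> F y - F x" "F y - F x \<le> f y * (y - x)"
proof -
  have split: "F y = F x + integral {x..y} f"
    unfolding F_def using Henstock_Kurzweil_Integration.integral_combine[OF assms f_integrable[OF order_refl, of y]] by simp
  have int: "f integrable_on {x..y}" by (rule f_integrable[OF assms(1)])
  have "integral {x..y} (\<lambda>_. f x) \<le> integral {x..y} f"
    by (rule integral_le[OF integrable_const_ivl int]) (use assms in \<open>auto intro: f_mono\<close>)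
  then show "f x * (y - x) \<le> F y - F x" using split assms by (simp add: mult.commute)
  have "integral {x..y} f \<le> integral {x..y} (\<lambda>_. f y)"
    by (rule integral_le[OF int integrable_const_ivl]) (use assms in \<open>auto intro: f_mono\<close>)
  then show "F y - F x \<le> f y * (y - x)" using split assms by (simp add: mult.commute)
qed

lemma F_tangent_le:
  assumes "0 \<le> x" "0 \<le> y"
  shows "f x * (y - x) \<le> F y - F x"
proof (cases "x \<le> y")
  case False
  then have "F x - F y \<le> f x * (x - y)" using F_increment_bounds(2)[of y x] assms by simp
  moreover have "f x * (y - x) = - (f x * (x - y))" by (simp add: algebra_simps)
  ultimately show ?thesis by linarith
qed (use F_increment_bounds(1) assms in simp)

text \<open>Strict tangent inequality (strict convexity), via the midpoint of x and y.\<close>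
lemma F_tangent_less:
  assumes "0 \<le> x" "0 \<le> y" "x \<noteq> y"
  shows "f x * (y - x) < F y - F x"
proof -
  define m where "m = (x + y) / 2"
  have m: "0 \<le> m" using assms by (simp add: m_def)
  have first: "f x * (m - x) \<le> F m - F x" and second: "f m * (y - m) \<le> F y - F m"
    using F_tangent_le assms m by auto
  have "f x * (y - m) < f m * (y - m)"
  proof (cases "x < y")
    case True
    then show ?thesis using f_less[of x m] assms by (simp add: m_def)
  next
    case False
    then have "y < m" "m < x" using assms by (auto simp: m_def)
    then show ?thesis using f_less[of m x] m by simp
  qed
  moreover have "f x * (y - x) = f x * (m - x) + f x * (y - m)" by (simp add: algebra_simps)
  ultimately show ?thesis using first second by linarith
qed

lemma F_nonneg: "0 \<le> x \<Longrightarrow> 0 \<le> F x"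
  using F_tangent_le[of 0 x] f_zero by (simp add: F_def)

lemma L_tangent_le:
  assumes "nonneg_vec r" "nonneg_vec r'"
  shows "fvec f r \<bullet> (r' - r) \<le> Lfun f r' - Lfun f r"
proof -
  have "fvec f r \<bullet> (r' - r) = (\<Sum>i\<in>UNIV. f (r $ i) * (r' $ i - r $ i))"
    by (simp add: inner_vec_def fvec_def)
  also have "\<dots> \<le> (\<Sum>i\<in>UNIV. F (r' $ i) - F (r $ i))"
    by (rule sum_mono) (use assms in \<open>auto simp: nonneg_vec_def intro!: F_tangent_le\<close>)
  finally show ?thesis by (simp add: Lfun_eq sum_subtractf)
qed

lemma L_tangent_less:
  assumes "nonneg_vec r" "nonneg_vec r'" "r \<noteq> r'"
  shows "fvec f r \<bullet> (r' - r) < Lfun f r' - Lfun f r"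
proof -
  obtain j where j: "r $ j \<noteq> r' $ j" using assms(3) by (auto simp: vec_eq_iff)
  have "fvec f r \<bullet> (r' - r) = (\<Sum>i\<in>UNIV. f (r $ i) * (r' $ i - r $ i))"
    by (simp add: inner_vec_def fvec_def)
  also have "\<dots> < (\<Sum>i\<in>UNIV. F (r' $ i) - F (r $ i))"
    using assms j
    by (intro sum_strict_mono_ex1) (auto simp: nonneg_vec_def intro!: F_tangent_le F_tangent_less)
  finally show ?thesis by (simp add: Lfun_eq sum_subtractf)
qed

text \<open>The directional derivative along the
  segment is a limit of nonnegative values.\<close>
lemma L_argmin_variational:
  assumes C: "\<And>x. x \<in> C \<Longrightarrow> nonneg_vec x" "convex C"
    and r: "L_argmin f C r" and r': "r' \<in> C"
  shows "0 \<le> fvec f r \<bullet> (r' - r)"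
proof -
  define d where "d = r' - r"
  define g where "g t = (\<Sum>i\<in>UNIV. f (r $ i + t * d $ i) * d $ i)" for t
  have rC: "r \<in> C" and rmin: "\<And>y. y \<in> C \<Longrightarrow> Lfun f r \<le> Lfun f y"
    using r by (auto simp: L_argmin_def)
  have seg: "r + t *\<^sub>R d \<in> C" if "t \<in> {0..1}" for t
  proof -
    have "r + t *\<^sub>R d = (1 - t) *\<^sub>R r + t *\<^sub>R r'" by (simp add: d_def algebra_simps)
    then show ?thesis using convexD[OF C(2) rC r', of "1 - t" t] that by simp
  qed
  then have seg_nonneg: "0 \<le> r $ i + t * d $ i" if "t \<in> {0..1}" for t i
    using C(1) that by (force simp: nonneg_vec_def)
  have g_nonneg: "0 \<le> g t" if t: "t \<in> {0<..<1}" for t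
  proof -
    have "fvec f (r + t *\<^sub>R d) \<bullet> (r - (r + t *\<^sub>R d)) \<le> Lfun f r - Lfun f (r + t *\<^sub>R d)"
      using t by (intro L_tangent_le C(1) rC seg) auto
    moreover have "Lfun f r \<le> Lfun f (r + t *\<^sub>R d)" using rmin seg t by auto
    moreover have "fvec f (r + t *\<^sub>R d) \<bullet> (r - (r + t *\<^sub>R d)) = - t * g t"
      by (simp add: g_def inner_vec_def fvec_def sum_distrib_left algebra_simps)
    ultimately have "0 \<le> t * g t" by linarith
    then show ?thesis using t by (simp add: zero_le_mult_iff)
  qed
  have "continuous_on {0..1} (\<lambda>t. f (r $ i + t * d $ i))" for i
    by (rule continuous_on_compose2[OF f_cont]) (auto intro!: continuous_intros seg_nonneg)
  then have "continuous_on {0..1} g"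
    unfolding g_def by (intro continuous_intros)
  then have "(g \<longlongrightarrow> g 0) (at 0 within {0..1})"
    by (simp add: continuous_on_def)
  then have "(g \<longlongrightarrow> g 0) (at_right 0)"
    by (simp add: at_within_Icc_at_right)
  then have "0 \<le> g 0"
    by (rule tendsto_lowerbound)
      (auto intro: eventually_mono[OF eventually_at_right_real[of 0 1]] g_nonneg)
  then show ?thesis by (simp add: g_def d_def inner_vec_def fvec_def)
qed

text \<open>L is coercive and continuous, so it attains its minimum on every closed set of
  nonnegative vectors that is nonempty.\<close>
lemma L_argmin_exists:
  assumes C: "closed C" "\<And>x. x \<in> C \<Longrightarrow> nonneg_vec x" and a: "a \<in> C"
  shows "\<exists>r. L_argmin f C (r::real^'n)"
proof -
  have f1: "0 < f 1" using f_less[of 0 1] f_zero by simp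
  define M where "M = 1 + Lfun f a / f 1"
  have coord_le_sum: "F (x $ i) \<le> Lfun f x" if "nonneg_vec x" for x :: "real^'n" and i
    unfolding Lfun_eq
    by (rule member_le_sum) (use that in \<open>auto simp: nonneg_vec_def intro: F_nonneg\<close>)
  have bound: "y \<le> M" if "0 \<le> y" "F y \<le> Lfun f a" for y
  proof -
    have "f 1 * (y - 1) \<le> Lfun f a"
      using F_tangent_le[of 1 y] F_nonneg[of 1] that by simp
    then show ?thesis using f1 by (simp add: M_def field_simps)
  qed
  define B where "B = cbox (0::real^'n) (\<chi> _. M)"
  have memB: "x \<in> B \<longleftrightarrow> (\<forall>i. 0 \<le> x $ i \<and> x $ i \<le> M)" for x
    by (simp add: B_def mem_box_cart)
  have aCB: "a \<in> C \<inter> B"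
    using a C(2)[OF a] coord_le_sum[of a] bound by (auto simp: memB nonneg_vec_def)
  have "continuous_on (C \<inter> B) (\<lambda>r. F (r $ i))" for i
    by (rule continuous_on_compose2[OF F_cont[of M]]) (auto intro!: continuous_intros simp: memB)
  then have "continuous_on (C \<inter> B) (Lfun f)"
    unfolding Lfun_eq[abs_def] by (intro continuous_on_sum)
  moreover have "compact (C \<inter> B)"
    unfolding B_def by (intro closed_Int_compact C(1) compact_cbox)
  ultimately obtain r where r: "r \<in> C \<inter> B" "\<And>y. y \<in> C \<inter> B \<Longrightarrow> Lfun f r \<le> Lfun f y"
    using continuous_attains_inf[of "C \<inter> B" "Lfun f"] aCB by blast
  have "Lfun f r \<le> Lfun f y" if y: "y \<in> C" for y
  proof (cases "y \<in> B")
    case False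
    have y_nonneg: "0 \<le> y $ j" for j using C(2)[OF y] by (simp add: nonneg_vec_def)
    then have "\<exists>i. M < y $ i" using False unfolding memB by (meson not_le)
    then obtain i where "M < y $ i" "0 \<le> y $ i" using y_nonneg by blast
    then have "Lfun f a < F (y $ i)" using bound[of "y $ i"] by (meson leD not_le)
    also have "\<dots> \<le> Lfun f y" by (rule coord_le_sum[OF C(2)[OF y]])
    finally show ?thesis using r(2)[OF aCB] by linarith
  qed (use r y in auto)
  then show ?thesis using r(1) by (auto simp: L_argmin_def)
qed

text \<open>Strict convexity: minimisers over a convex set are unique.\<close>
lemma L_argmin_unique:
  assumes C: "\<And>x. x \<in> C \<Longrightarrow> nonneg_vec x" "convex C"
    and "L_argmin f C r1" "L_argmin f C r2"
  shows "r1 = r2"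
proof (rule ccontr)
  assume ne: "r1 \<noteq> r2"
  have "0 \<le> fvec f r1 \<bullet> (r2 - r1)"
    using assms by (intro L_argmin_variational) (auto simp: L_argmin_def)
  also have "\<dots> < Lfun f r2 - Lfun f r1"
    using assms ne by (intro L_tangent_less) (auto simp: L_argmin_def)
  finally show False using assms by (auto simp: L_argmin_def)
qed

lemma fvec_scaled_support:
  assumes "nonneg_vec r" "0 < \<kappa>"
  shows "fvec f (\<kappa> *\<^sub>R r) $ i = 0 \<longleftrightarrow> r $ i = 0" "fvec f r $ i = 0 \<longleftrightarrow> r $ i = 0"
    "nonneg_vec (fvec f (\<kappa> *\<^sub>R r))" "nonneg_vec (fvec f r)"
proof -
  have r: "0 \<le> r $ j" and \<kappa>r: "0 \<le> \<kappa> * r $ j" for j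
    using assms by (simp_all add: nonneg_vec_def)
  show "fvec f (\<kappa> *\<^sub>R r) $ i = 0 \<longleftrightarrow> r $ i = 0"
    using f_eq_0_iff[OF \<kappa>r[of i]] assms(2) by (simp add: fvec_def)
  show "fvec f r $ i = 0 \<longleftrightarrow> r $ i = 0"
    using f_eq_0_iff[OF r[of i]] by (simp add: fvec_def)
  show "nonneg_vec (fvec f (\<kappa> *\<^sub>R r))" "nonneg_vec (fvec f r)"
    using f_nonneg[OF \<kappa>r] f_nonneg[OF r] by (simp_all add: fvec_def nonneg_vec_def)
qed

end

lemma admissible_cost_function: "admissible_f f S \<Longrightarrow> cost_function f"
  unfolding admissible_f_def cost_function_def
  by (simp add: continuous_on_eq_continuous_within differentiable_imp_continuous_within)

section \<open>The feasible set D(q)\<close>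

lemma Dfeas_nonneg: "x \<in> Dfeas S lam q \<Longrightarrow> nonneg_vec x"
  by (simp add: Dfeas_def)

lemma Dfeas_self: "nonneg_vec q \<Longrightarrow> q \<in> Dfeas S lam q"
  by (simp add: Dfeas_def)

lemma Dfeas_convex: "convex (Dfeas S lam q)"
proof (rule convexI)
  fix x y and u v :: real
  assume x: "x \<in> Dfeas S lam q" and y: "y \<in> Dfeas S lam q" and uv: "0 \<le> u" "0 \<le> v" "u + v = 1"
  have comb: "c \<le> u * a + v * b" if "c \<le> a" "c \<le> b" for a b c :: real
  proof -
    have "u * c + v * c \<le> u * a + v * b" using uv that by (intro add_mono mult_left_mono) auto
    moreover have "u * c + v * c = c" using uv(3) by (metis distrib_right mult_1)
    ultimately show ?thesis by simp
  qed
  have comb': "u * a + v * b \<le> c" if "a \<le> c" "b \<le> c" for a b c :: real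
    using comb[of "- c" "- a" "- b"] that by simp
  have "\<xi> \<bullet> q \<le> \<xi> \<bullet> (u *\<^sub>R x + v *\<^sub>R y)" if "\<xi> \<in> Xi S lam" for \<xi>
    using x y that by (auto simp: Dfeas_def inner_add_right intro!: comb)
  moreover have "(u *\<^sub>R x + v *\<^sub>R y) $ n \<le> q $ n" if "lam $ n = 0" for n
    using x y that by (auto simp: Dfeas_def intro!: comb')
  moreover have "nonneg_vec (u *\<^sub>R x + v *\<^sub>R y)"
    using x y uv by (auto simp: Dfeas_def nonneg_vec_def)
  ultimately show "u *\<^sub>R x + v *\<^sub>R y \<in> Dfeas S lam q" by (simp add: Dfeas_def)
qed

lemma Dfeas_closed: "closed (Dfeas S lam q)"
proof -
  have "Dfeas S lam q = {r. (\<forall>i. 0 \<le> r $ i) \<and> (\<forall>\<xi>. \<xi> \<in> Xi S lam \<longrightarrow> \<xi> \<bullet> q \<le> \<xi> \<bullet> r)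
        \<and> (\<forall>n. lam $ n = 0 \<longrightarrow> r $ n \<le> q $ n)}"
    by (auto simp: Dfeas_def nonneg_vec_def)
  then show ?thesis
    by (simp only:) (intro closed_Collect_conj closed_Collect_all closed_Collect_imp
        open_Collect_const closed_Collect_le continuous_intros)
qed

lemma Dfeas_scale: "0 < \<kappa> \<Longrightarrow> \<kappa> *\<^sub>R r \<in> Dfeas S lam (\<kappa> *\<^sub>R q) \<longleftrightarrow> r \<in> Dfeas S lam q"
  by (auto simp: Dfeas_def nonneg_vec_def zero_le_mult_iff)

lemma (in cost_function) Delta_eqI:
  assumes "L_argmin f (Dfeas S lam q) r"
  shows "Delta f S lam q = r"
  unfolding Delta_def L_argmin_def[symmetric]
proof (rule the_equality)
  show "L_argmin f (Dfeas S lam q) r" by fact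
  show "r' = r" if "L_argmin f (Dfeas S lam q) r'" for r'
    using L_argmin_unique[of "Dfeas S lam q" r' r] Dfeas_nonneg Dfeas_convex that assms by blast
qed

lemma (in cost_function) Dfeas_argmin_variational:
  assumes "L_argmin f (Dfeas S lam q) r" "r' \<in> Dfeas S lam q"
  shows "0 \<le> fvec f r \<bullet> (r' - r)"
  using L_argmin_variational[of "Dfeas S lam q" r r'] Dfeas_nonneg Dfeas_convex assms by blast

lemma (in cost_function) Dfeas_argmin_exists:
  assumes "nonneg_vec q"
  shows "\<exists>r. L_argmin f (Dfeas S lam q) r"
  using L_argmin_exists[of "Dfeas S lam q" q] Dfeas_closed Dfeas_nonneg Dfeas_self[OF assms] by blast

section \<open>The capacity region and its dual polytope\<close>

locale capacity_region =
  fixes S :: "(real^'n) set" and lam :: "real^'n"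
  assumes finite_S: "finite S" and S_nonneg: "\<forall>\<pi>\<in>S. nonneg_vec \<pi>"
    and lam_in_Lambda: "lam \<in> Lambda S"
begin

lemma S_coord_nonneg: "\<pi> \<in> S \<Longrightarrow> 0 \<le> \<pi> $ i"
  using S_nonneg by (auto simp: nonneg_vec_def)

lemma lam_nonneg: "nonneg_vec lam"
  using lam_in_Lambda by (simp add: Lambda_def)

lemma lam_dominated:
  obtains \<alpha> where "\<forall>\<pi>\<in>S. 0 \<le> \<alpha> \<pi>" "sum \<alpha> S = 1" "vle lam (\<Sum>\<pi>\<in>S. \<alpha> \<pi> *\<^sub>R \<pi>)"
  using lam_in_Lambda convex_hull_finite[OF finite_S] by (auto simp: Lambda_def)

lemma dual_poly_inner_lam: assumes "\<xi> \<in> dual_poly S" shows "\<xi> \<bullet> lam \<le> 1"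
proof -
  obtain \<alpha> where \<alpha>: "\<forall>\<pi>\<in>S. 0 \<le> \<alpha> \<pi>" "sum \<alpha> S = 1" "vle lam (\<Sum>\<pi>\<in>S. \<alpha> \<pi> *\<^sub>R \<pi>)"
    using lam_dominated by blast
  have "\<xi> \<bullet> lam \<le> \<xi> \<bullet> (\<Sum>\<pi>\<in>S. \<alpha> \<pi> *\<^sub>R \<pi>)"
    using assms \<alpha> by (intro inner_vle_mono) (auto simp: dual_poly_def)
  also have "\<dots> = (\<Sum>\<pi>\<in>S. \<alpha> \<pi> * (\<xi> \<bullet> \<pi>))" by (simp add: inner_sum_right)
  also have "\<dots> \<le> (\<Sum>\<pi>\<in>S. \<alpha> \<pi> * 1)"
    using assms \<alpha> by (intro sum_mono) (auto simp: dual_poly_def intro!: mult_left_le)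
  finally show ?thesis using \<alpha> by simp
qed

definition idle :: "'n \<Rightarrow> bool" where "idle n \<longleftrightarrow> (\<forall>\<pi>\<in>S. \<pi> $ n = 0)"

lemma dual_poly_polyhedron: "polyhedron (dual_poly S)"
proof -
  have "dual_poly S = \<Inter> ((\<lambda>i. {\<xi>. (- axis i 1) \<bullet> \<xi> \<le> 0}) ` UNIV \<union> (\<lambda>\<pi>. {\<xi>. \<xi> \<bullet> \<pi> \<le> 1}) ` S)"
    by (auto simp: dual_poly_def nonneg_vec_def inner_axis')
  moreover have "polyhedron {\<xi>. \<xi> \<bullet> \<pi> \<le> 1}" for \<pi> :: "real^'n"
    using polyhedron_halfspace_le[of \<pi> 1] by (simp add: inner_commute)
  moreover have "polyhedron {\<xi>::real^'n. (- axis i 1) \<bullet> \<xi> \<le> (0::real)}" for i :: 'n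
    using polyhedron_halfspace_le[of "- axis i (1::real)" 0] by simp
  ultimately show ?thesis
    using finite_S by (auto intro!: polyhedron_Inter)
qed

lemma finite_Eset: "finite (Eset S)"
  using finite_polyhedron_extreme_points[OF dual_poly_polyhedron] by (simp add: Eset_def)

lemma Eset_dual_poly: "\<xi> \<in> Eset S \<Longrightarrow> \<xi> \<in> dual_poly S"
  by (simp add: Eset_def extreme_point_of_def)

text \<open>An extreme point vanishes on idle coordinates: otherwise it is the midpoint of the
  points obtained by halving and doubling that coordinate.\<close>
lemma Eset_idle:
  assumes e: "\<xi> \<in> Eset S" and idle: "idle n"
  shows "\<xi> $ n = 0"
proof (rule ccontr)
  assume ne: "\<xi> $ n \<noteq> 0"
  have \<xi>: "\<xi> \<in> dual_poly S" using Eset_dual_poly e by simp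
  define a where "a = \<xi> - (\<xi> $ n) *\<^sub>R axis n 1"
  define b where "b = \<xi> + (\<xi> $ n) *\<^sub>R axis n 1"
  have "a \<bullet> \<pi> = \<xi> \<bullet> \<pi>" "b \<bullet> \<pi> = \<xi> \<bullet> \<pi>" if "\<pi> \<in> S" for \<pi>
    using idle that by (simp_all add: idle_def a_def b_def inner_diff_left inner_add_left inner_axis')
  moreover have "nonneg_vec a" "nonneg_vec b"
    using \<xi> by (auto simp: a_def b_def dual_poly_def nonneg_vec_def axis_def)
  ultimately have "a \<in> dual_poly S" "b \<in> dual_poly S"
    using \<xi> by (simp_all add: dual_poly_def)
  moreover have "\<xi> \<in> open_segment a b"
  proof -
    have "a \<noteq> b" using ne by (auto simp: a_def b_def vec_eq_iff axis_def)
    moreover have "\<xi> = (1 - 1/2) *\<^sub>R a + (1/2) *\<^sub>R b"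
      by (auto simp: a_def b_def vec_eq_iff algebra_simps)
    ultimately show ?thesis unfolding in_segment by (intro conjI exI[of _ "1/2"]) auto
  qed
  ultimately show False using e by (auto simp: Eset_def extreme_point_of_def)
qed

text \<open>Certificate for a single extreme point: an extreme point with e . lam = 1 lies below
  a maximal one z, which belongs to Xi(lam); z - e is supported on coordinates with
  lam = 0, where feasible points are bounded by q.\<close>
lemma Eset_certificate:
  assumes e: "e \<in> Eset S" "e \<bullet> lam = 1" and r': "r' \<in> Dfeas S lam q"
  shows "e \<bullet> q \<le> e \<bullet> r'"
proof -
  obtain z where zE: "z \<in> Eset S" and "e \<le> z" and zmax: "\<forall>b\<in>Eset S. z \<le> b \<longrightarrow> z = b"
    using finite_has_maximal2[OF finite_Eset e(1)] by blast
  then have ez: "vle e z" and zS: "z \<in> Sstar S"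
    by (auto simp: Sstar_def vle_iff_le)
  have "e \<bullet> lam \<le> z \<bullet> lam"
    using inner_vle_mono[OF lam_nonneg ez] by (simp add: inner_commute)
  then have zl: "z \<bullet> lam = 1"
    using dual_poly_inner_lam[OF Eset_dual_poly[OF zE]] e(2) by simp
  then have zq: "z \<bullet> q \<le> z \<bullet> r'" using zS r' by (auto simp: Dfeas_def Xi_def)
  define \<delta> where "\<delta> = z - e"
  have \<delta>_nonneg: "0 \<le> \<delta> $ i" for i using ez by (simp add: \<delta>_def vle_def)
  have "\<delta> \<bullet> lam = 0" using zl e(2) by (simp add: \<delta>_def inner_diff_left)
  then have slack: "\<delta> $ i * lam $ i = 0" for i
    using \<delta>_nonneg lam_nonneg by (intro inner_eq_0_coordinates) (auto simp: nonneg_vec_def)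
  have "\<delta> $ i * (r' $ i - q $ i) \<le> 0" for i
  proof (cases "\<delta> $ i = 0")
    case False
    then have "lam $ i = 0" using slack[of i] by simp
    then show ?thesis using r' \<delta>_nonneg[of i] by (simp add: Dfeas_def mult_nonneg_nonpos)
  qed simp
  then have "\<delta> \<bullet> (r' - q) \<le> 0" by (simp add: inner_vec_def sum_nonpos)
  then show ?thesis using zq by (simp add: \<delta>_def inner_diff_left inner_diff_right)
qed

definition dual_core :: "(real^'n) set" where
  "dual_core = {\<xi>\<in>dual_poly S. \<forall>n. idle n \<longrightarrow> \<xi> $ n = 0}"

lemma dual_core_extreme:
  assumes "e extreme_point_of dual_core"
  shows "e \<in> Eset S"
proof -
  have eB: "e \<in> dual_core" using assms by (simp add: extreme_point_of_def)
  have "e \<notin> open_segment a b" if a: "a \<in> dual_poly S" and b: "b \<in> dual_poly S" for a b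
  proof
    assume seg: "e \<in> open_segment a b"
    then obtain u where u: "0 < u" "u < 1" "e = (1 - u) *\<^sub>R a + u *\<^sub>R b"
      unfolding in_segment by blast
    have "a $ n = 0 \<and> b $ n = 0" if "idle n" for n
    proof -
      have "(1 - u) * a $ n + u * b $ n = 0" using eB that u by (simp add: dual_core_def)
      moreover have "0 \<le> a $ n" "0 \<le> b $ n" using a b by (auto simp: dual_poly_def nonneg_vec_def)
      ultimately show ?thesis using u by (smt (verit) mult_pos_pos mult_nonneg_nonneg)
    qed
    then have "a \<in> dual_core" "b \<in> dual_core" using a b by (auto simp: dual_core_def)
    then show False using assms seg by (auto simp: extreme_point_of_def)
  qed
  then show ?thesis using eB by (simp add: Eset_def extreme_point_of_def dual_core_def)
qed

lemma dual_core_eq: "dual_core = dual_poly S \<inter> {\<xi>. \<forall>n. idle n \<longrightarrow> \<xi> $ n = 0}"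
  by (auto simp: dual_core_def)

lemma dual_core_convex: "convex dual_core"
  unfolding dual_core_eq
  by (intro convex_Int polyhedron_imp_convex[OF dual_poly_polyhedron]) (auto intro!: convexI)

text \<open>Each non-idle coordinate is bounded by 1/pi_n for a schedule pi serving it.\<close>
lemma dual_core_compact: "compact dual_core"
proof -
  have "closed dual_core"
    unfolding dual_core_eq
    by (intro closed_Int polyhedron_imp_closed[OF dual_poly_polyhedron] closed_Collect_all
        closed_Collect_imp open_Collect_const closed_Collect_eq continuous_intros)
  moreover have "\<exists>c. \<forall>\<xi>\<in>dual_core. 0 \<le> \<xi> $ n \<and> \<xi> $ n \<le> c" for n
  proof (cases "idle n")
    case True
    then show ?thesis by (auto simp: dual_core_def)
  next
    case False
    then obtain \<pi> where \<pi>: "\<pi> \<in> S" "0 < \<pi> $ n"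
      using S_coord_nonneg by (force simp: idle_def less_le)
    have "\<xi> $ n \<le> 1 / \<pi> $ n" if "\<xi> \<in> dual_core" for \<xi>
    proof -
      have "\<xi> $ n * \<pi> $ n \<le> (\<Sum>i\<in>UNIV. \<xi> $ i * \<pi> $ i)"
        using that \<pi> S_coord_nonneg
        by (intro member_le_sum) (auto simp: dual_core_def dual_poly_def nonneg_vec_def)
      also have "\<dots> \<le> 1" using that \<pi> by (auto simp: dual_core_def dual_poly_def inner_vec_def)
      finally show ?thesis using \<pi> by (simp add: field_simps)
    qed
    then show ?thesis by (auto simp: dual_core_def dual_poly_def nonneg_vec_def)
  qed
  then obtain c where "\<forall>n. \<forall>\<xi>\<in>dual_core. 0 \<le> \<xi> $ n \<and> \<xi> $ n \<le> c n" by metis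
  then have "dual_core \<subseteq> cbox 0 (\<chi> n. c n)" by (auto simp: mem_box_cart)
  then have "bounded dual_core" using bounded_cbox bounded_subset by blast
  ultimately show ?thesis by (simp add: compact_eq_bounded_closed)
qed

text \<open>After normalisation u is a convex
  combination of extreme points e of the compact dual core, and all e with positive weight
  satisfy e . lam = 1.\<close>
lemma certificate:
  assumes u: "nonneg_vec u" "\<And>n. idle n \<Longrightarrow> u $ n = 0" "\<And>\<pi>. \<pi> \<in> S \<Longrightarrow> u \<bullet> \<pi> \<le> u \<bullet> lam"
    and r': "r' \<in> Dfeas S lam q"
  shows "u \<bullet> q \<le> u \<bullet> r'"
proof (cases "u \<bullet> lam = 0")
  case True
  have "u $ n = 0" for n
  proof (cases "idle n")
    case False
    then obtain \<pi> where \<pi>: "\<pi> \<in> S" "0 < \<pi> $ n"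
      using S_coord_nonneg by (force simp: idle_def less_le)
    have "u $ n * \<pi> $ n \<le> (\<Sum>i\<in>UNIV. u $ i * \<pi> $ i)"
      using u \<pi> S_coord_nonneg by (intro member_le_sum) (auto simp: nonneg_vec_def)
    also have "\<dots> \<le> 0" using u(3)[OF \<pi>(1)] True by (simp add: inner_vec_def)
    finally have "u $ n \<le> 0" using \<pi>(2) by (simp add: mult_le_0_iff)
    then show ?thesis using u(1) by (simp add: nonneg_vec_def order_antisym)
  qed (use u in auto)
  then show ?thesis by (simp add: inner_vec_def)
next
  case False
  define c where "c = u \<bullet> lam"
  have c: "0 < c" using False inner_nonneg_vec[OF u(1) lam_nonneg] by (simp add: c_def)
  define x where "x = (1/c) *\<^sub>R u"
  have "x \<bullet> \<pi> \<le> 1" if "\<pi> \<in> S" for \<pi>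
    using u(3)[OF that] c by (simp add: x_def c_def field_simps)
  moreover have "nonneg_vec x" using u(1) c by (simp add: x_def nonneg_vec_def)
  ultimately have "x \<in> dual_core"
    using u(2) by (simp add: dual_core_def dual_poly_def x_def)
  define X where "X = {e. e extreme_point_of dual_core}"
  have XE: "e \<in> Eset S" if "e \<in> X" for e using dual_core_extreme that by (simp add: X_def)
  have fX: "finite X" by (rule finite_subset[OF _ finite_Eset]) (use XE in blast)
  have "x \<in> convex hull X"
    using Krein_Milman_Minkowski[OF dual_core_compact dual_core_convex] \<open>x \<in> dual_core\<close>
    by (simp add: X_def)
  then obtain t where t: "\<forall>e\<in>X. 0 \<le> t e" "sum t X = 1" "(\<Sum>e\<in>X. t e *\<^sub>R e) = x"
    using convex_hull_finite[OF fX] by auto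
  have "(\<Sum>e\<in>X. t e * (e \<bullet> lam)) = x \<bullet> lam" by (simp add: t(3)[symmetric] inner_sum_left)
  also have "\<dots> = 1" using c by (simp add: x_def c_def)
  finally have "(\<Sum>e\<in>X. t e * (1 - e \<bullet> lam)) = 0"
    using t(2) by (simp add: right_diff_distrib sum_subtractf)
  moreover have "\<forall>e\<in>X. 0 \<le> t e * (1 - e \<bullet> lam)"
    using t(1) dual_poly_inner_lam[OF Eset_dual_poly[OF XE]] by simp
  ultimately have tight: "t e * (1 - e \<bullet> lam) = 0" if "e \<in> X" for e
    using sum_nonneg_eq_0_iff[OF fX, of "\<lambda>e. t e * (1 - e \<bullet> lam)"] that by simp
  have "0 \<le> t e * (e \<bullet> (r' - q))" if e: "e \<in> X" for e
  proof (cases "t e = 0")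
    case False
    then have "e \<bullet> q \<le> e \<bullet> r'" using tight[OF e] Eset_certificate[OF XE[OF e] _ r'] by simp
    then show ?thesis using t(1) e by (simp add: inner_diff_right)
  qed simp
  then have "0 \<le> (\<Sum>e\<in>X. t e * (e \<bullet> (r' - q)))" by (rule sum_nonneg)
  also have "\<dots> = x \<bullet> (r' - q)" by (simp add: t(3)[symmetric] inner_sum_left)
  finally have "0 \<le> (1/c) * (u \<bullet> (r' - q))" by (simp add: x_def)
  then show ?thesis using c by (simp add: zero_le_divide_iff inner_diff_right)
qed

lemma max_weight_slackness:
  assumes w: "nonneg_vec w" "\<And>\<pi>. \<pi> \<in> S \<Longrightarrow> w \<bullet> \<pi> \<le> w \<bullet> lam"
    and \<alpha>: "\<forall>\<pi>\<in>S. 0 \<le> \<alpha> \<pi>" "sum \<alpha> S = 1" "vle lam (\<Sum>\<pi>\<in>S. \<alpha> \<pi> *\<^sub>R \<pi>)"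
  shows "\<And>\<pi>. \<pi> \<in> S \<Longrightarrow> \<alpha> \<pi> \<noteq> 0 \<Longrightarrow> w \<bullet> \<pi> = w \<bullet> lam"
    and "\<And>i. w $ i * ((\<Sum>\<pi>\<in>S. \<alpha> \<pi> *\<^sub>R \<pi>) $ i - lam $ i) = 0"
proof -
  define \<sigma> where "\<sigma> = (\<Sum>\<pi>\<in>S. \<alpha> \<pi> *\<^sub>R \<pi>)"
  have slack_nonneg: "\<forall>\<pi>\<in>S. 0 \<le> \<alpha> \<pi> * (w \<bullet> lam - w \<bullet> \<pi>)" using \<alpha>(1) w(2) by simp
  have "w \<bullet> \<sigma> = (\<Sum>\<pi>\<in>S. \<alpha> \<pi> * (w \<bullet> \<pi>))" by (simp add: \<sigma>_def inner_sum_right)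
  then have sum_slack: "(\<Sum>\<pi>\<in>S. \<alpha> \<pi> * (w \<bullet> lam - w \<bullet> \<pi>)) = w \<bullet> lam - w \<bullet> \<sigma>"
    using \<alpha>(2) by (simp add: right_diff_distrib sum_subtractf sum_distrib_right[symmetric])
  have "w \<bullet> lam \<le> w \<bullet> \<sigma>" using inner_vle_mono[OF w(1) \<alpha>(3)] by (simp add: \<sigma>_def)
  moreover have "0 \<le> w \<bullet> lam - w \<bullet> \<sigma>"
    using sum_nonneg[of S "\<lambda>\<pi>. \<alpha> \<pi> * (w \<bullet> lam - w \<bullet> \<pi>)"] slack_nonneg sum_slack by simp
  ultimately have w\<sigma>: "w \<bullet> \<sigma> = w \<bullet> lam" by simp
  show "w \<bullet> \<pi> = w \<bullet> lam" if "\<pi> \<in> S" "\<alpha> \<pi> \<noteq> 0" for \<pi>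
  proof -
    have "\<forall>\<rho>\<in>S. \<alpha> \<rho> * (w \<bullet> lam - w \<bullet> \<rho>) = 0"
      using sum_nonneg_eq_0_iff[OF finite_S, of "\<lambda>\<rho>. \<alpha> \<rho> * (w \<bullet> lam - w \<bullet> \<rho>)"]
        slack_nonneg sum_slack w\<sigma> by simp
    then have "\<alpha> \<pi> * (w \<bullet> lam - w \<bullet> \<pi>) = 0" using that(1) by (rule bspec)
    then show ?thesis using that(2) by simp
  qed
  show "w $ i * ((\<Sum>\<pi>\<in>S. \<alpha> \<pi> *\<^sub>R \<pi>) $ i - lam $ i) = 0" for i
  proof -
    have "0 \<le> w $ j * (\<sigma> - lam) $ j" for j
      using w(1) \<alpha>(3) by (simp add: nonneg_vec_def vle_def \<sigma>_def)
    then show ?thesis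
      using inner_eq_0_coordinates[of w "\<sigma> - lam" i] w\<sigma> by (simp add: inner_diff_right \<sigma>_def)
  qed
qed

lemma max_weight_transfer:
  assumes w: "nonneg_vec w" "\<And>\<pi>. \<pi> \<in> S \<Longrightarrow> w \<bullet> \<pi> \<le> w \<bullet> lam"
    and support: "\<And>i. w $ i = 0 \<longleftrightarrow> w' $ i = 0"
    and transfer: "\<And>\<pi>. \<pi> \<in> S \<Longrightarrow> \<forall>\<rho>\<in>S. \<rho> \<bullet> w \<le> \<pi> \<bullet> w \<Longrightarrow> \<forall>\<rho>\<in>S. \<rho> \<bullet> w' \<le> \<pi> \<bullet> w'"
  shows "\<And>\<pi>. \<pi> \<in> S \<Longrightarrow> w' \<bullet> \<pi> \<le> w' \<bullet> lam"
    and "\<And>\<pi>. \<pi> \<in> S \<Longrightarrow> w \<bullet> \<pi> = w \<bullet> lam \<Longrightarrow> w' \<bullet> \<pi> = w' \<bullet> lam"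
proof -
  obtain \<alpha> where \<alpha>: "\<forall>\<pi>\<in>S. 0 \<le> \<alpha> \<pi>" "sum \<alpha> S = 1" "vle lam (\<Sum>\<pi>\<in>S. \<alpha> \<pi> *\<^sub>R \<pi>)"
    using lam_dominated by blast
  have tight: "w \<bullet> \<pi> = w \<bullet> lam" if "\<pi> \<in> S" "\<alpha> \<pi> \<noteq> 0" for \<pi>
    using w \<alpha> that by (rule max_weight_slackness(1))
  have slack: "w $ i * ((\<Sum>\<pi>\<in>S. \<alpha> \<pi> *\<^sub>R \<pi>) $ i - lam $ i) = 0" for i
    using w \<alpha> by (rule max_weight_slackness(2))
  define \<sigma> where "\<sigma> = (\<Sum>\<pi>\<in>S. \<alpha> \<pi> *\<^sub>R \<pi>)"
  have tight_max: "w' \<bullet> \<rho> \<le> w' \<bullet> \<pi>" if "\<pi> \<in> S" "w \<bullet> \<pi> = w \<bullet> lam" "\<rho> \<in> S" for \<pi> \<rho>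
  proof -
    have "\<forall>\<rho>\<in>S. \<rho> \<bullet> w \<le> \<pi> \<bullet> w" using w(2) that(2) by (simp add: inner_commute)
    then have "\<forall>\<rho>\<in>S. \<rho> \<bullet> w' \<le> \<pi> \<bullet> w'" by (rule transfer[OF that(1)])
    then show ?thesis using that(3) by (simp add: inner_commute)
  qed
  have "\<exists>\<pi>1\<in>S. \<alpha> \<pi>1 \<noteq> 0"
  proof (rule ccontr)
    assume "\<not> ?thesis"
    then have "sum \<alpha> S = 0" by simp
    then show False using \<alpha>(2) by simp
  qed
  then obtain \<pi>1 where \<pi>1: "\<pi>1 \<in> S" "\<alpha> \<pi>1 \<noteq> 0" by blast
  note \<pi>1_max = tight_max[OF \<pi>1(1) tight[OF \<pi>1]]
  have "\<alpha> \<pi> * (w' \<bullet> \<pi>) = \<alpha> \<pi> * (w' \<bullet> \<pi>1)" if "\<pi> \<in> S" for \<pi>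
  proof (cases "\<alpha> \<pi> = 0")
    case False
    then have "w' \<bullet> \<pi> = w' \<bullet> \<pi>1"
      using tight_max[OF that tight[OF that False] \<pi>1(1)] \<pi>1_max[OF that] by simp
    then show ?thesis by simp
  qed simp
  then have "(\<Sum>\<pi>\<in>S. \<alpha> \<pi> * (w' \<bullet> \<pi>)) = (\<Sum>\<pi>\<in>S. \<alpha> \<pi> * (w' \<bullet> \<pi>1))"
    by (rule sum.cong[OF refl])
  then have "w' \<bullet> \<sigma> = (\<Sum>\<pi>\<in>S. \<alpha> \<pi>) * (w' \<bullet> \<pi>1)"
    by (simp add: \<sigma>_def inner_sum_right sum_distrib_right)
  moreover have "w' \<bullet> (\<sigma> - lam) = 0"
  proof -
    have "w' $ i * (\<sigma> - lam) $ i = 0" for i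
      using slack[of i] support[of i] by (auto simp: \<sigma>_def)
    then show ?thesis unfolding inner_vec_def inner_real_def by (intro sum.neutral) blast
  qed
  ultimately have lam_max: "w' \<bullet> lam = w' \<bullet> \<pi>1" using \<alpha>(2) by (simp add: inner_diff_right)
  show max': "w' \<bullet> \<pi> \<le> w' \<bullet> lam" if "\<pi> \<in> S" for \<pi>
    using \<pi>1_max[OF that] lam_max by simp
  show "w' \<bullet> \<pi> = w' \<bullet> lam" if "\<pi> \<in> S" "w \<bullet> \<pi> = w \<bullet> lam" for \<pi>
    using tight_max[OF that \<pi>1(1)] max'[OF that(1)] lam_max by simp
qed

text \<open>Splitting lemma: under the conclusions of the transfer lemma, w - eps w' is still
  nonnegative with lam max-weight, for some eps > 0.  Schedules tight for w are tight for
  both weights; for the others there is a positive gap that survives small eps.\<close>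
lemma max_weight_split:
  assumes w: "nonneg_vec w" "\<And>\<pi>. \<pi> \<in> S \<Longrightarrow> w \<bullet> \<pi> \<le> w \<bullet> lam"
    and support: "\<And>i. w $ i = 0 \<longleftrightarrow> w' $ i = 0"
    and tight: "\<And>\<pi>. \<pi> \<in> S \<Longrightarrow> w \<bullet> \<pi> = w \<bullet> lam \<Longrightarrow> w' \<bullet> \<pi> = w' \<bullet> lam"
  shows "\<exists>\<epsilon>>0. nonneg_vec (w - \<epsilon> *\<^sub>R w') \<and> (\<forall>\<pi>\<in>S. (w - \<epsilon> *\<^sub>R w') \<bullet> \<pi> \<le> (w - \<epsilon> *\<^sub>R w') \<bullet> lam)"
proof -
  have ev: "\<forall>\<^sub>F e in at_right (0::real). 0 < e \<and> (\<forall>i. 0 \<le> w $ i - e * w' $ i) \<and>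
      (\<forall>\<pi>\<in>S. w \<bullet> \<pi> < w \<bullet> lam \<longrightarrow> 0 < (w \<bullet> lam - w \<bullet> \<pi>) + e * (w' \<bullet> \<pi> - w' \<bullet> lam))"
  proof (intro eventually_conj eventually_at_right_less eventually_all_finite
      eventually_ball_finite finite_S ballI allI)
    fix i
    show "\<forall>\<^sub>F e in at_right (0::real). 0 \<le> w $ i - e * w' $ i"
    proof (cases "w $ i = 0")
      case False
      then have "0 < w $ i" using w(1) by (simp add: nonneg_vec_def less_le)
      then show ?thesis using eventually_at_right_affine_pos[of "w $ i" "- w' $ i"] by (auto elim: eventually_mono)
    qed (use support[of i] in simp)
  next
    fix \<pi>
    show "\<forall>\<^sub>F e in at_right (0::real).
        w \<bullet> \<pi> < w \<bullet> lam \<longrightarrow> 0 < (w \<bullet> lam - w \<bullet> \<pi>) + e * (w' \<bullet> \<pi> - w' \<bullet> lam)"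
      using eventually_at_right_affine_pos[of "w \<bullet> lam - w \<bullet> \<pi>" "w' \<bullet> \<pi> - w' \<bullet> lam"]
      by (cases "w \<bullet> \<pi> < w \<bullet> lam") auto
  qed
  obtain \<epsilon> where \<epsilon>: "0 < \<epsilon>" "\<forall>i. 0 \<le> w $ i - \<epsilon> * w' $ i"
      "\<forall>\<pi>\<in>S. w \<bullet> \<pi> < w \<bullet> lam \<longrightarrow> 0 < (w \<bullet> lam - w \<bullet> \<pi>) + \<epsilon> * (w' \<bullet> \<pi> - w' \<bullet> lam)"
    using eventually_happens[OF ev] by auto
  have "(w - \<epsilon> *\<^sub>R w') \<bullet> \<pi> \<le> (w - \<epsilon> *\<^sub>R w') \<bullet> lam" if \<pi>: "\<pi> \<in> S" for \<pi>
  proof (cases "w \<bullet> \<pi> < w \<bullet> lam")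
    case True
    then have gap: "0 < (w \<bullet> lam - w \<bullet> \<pi>) + \<epsilon> * (w' \<bullet> \<pi> - w' \<bullet> lam)" using \<epsilon>(3) \<pi> by blast
    have "\<epsilon> * (w' \<bullet> \<pi> - w' \<bullet> lam) = \<epsilon> * (w' \<bullet> \<pi>) - \<epsilon> * (w' \<bullet> lam)"
      by (rule right_diff_distrib)
    then show ?thesis using gap by (simp add: inner_diff_left)
  next
    case False
    then show ?thesis using w(2)[OF \<pi>] tight[OF \<pi>] by (simp add: inner_diff_left)
  qed
  then show ?thesis using \<epsilon> by (auto simp: nonneg_vec_def)
qed

end

section \<open>Optimality at the minimiser and the scaling argument\<close>

locale single_hop = capacity_region S lam + cost_function f
  for S :: "(real^'n) set" and lam :: "real^'n" and f :: "real \<Rightarrow> real" +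
  assumes max_weight_scaling: "\<And>q \<pi> \<kappa>. nonneg_vec q \<Longrightarrow> \<pi> \<in> S \<Longrightarrow>
      \<forall>\<rho>\<in>S. \<rho> \<bullet> fvec f q \<le> \<pi> \<bullet> fvec f q \<Longrightarrow> 0 \<le> \<kappa> \<Longrightarrow>
      \<forall>\<rho>\<in>S. \<rho> \<bullet> fvec f (\<kappa> *\<^sub>R q) \<le> \<pi> \<bullet> fvec f (\<kappa> *\<^sub>R q)"
begin

text \<open>The minimiser does not hold work in idle queues: emptying such a queue keeps
  feasibility (extreme points ignore idle coordinates) and strictly decreases L.\<close>
lemma argmin_idle:
  assumes q: "nonneg_vec q" and r: "L_argmin f (Dfeas S lam q) r" and n: "idle n"
  shows "r $ n = 0"
proof (rule ccontr)
  assume ne: "r $ n \<noteq> 0"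
  define r' where "r' = r - (r $ n) *\<^sub>R axis n 1"
  have rD: "r \<in> Dfeas S lam q" using r by (simp add: L_argmin_def)
  have r'i: "r' $ i = (if i = n then 0 else r $ i)" for i by (simp add: r'_def axis_def)
  have "\<xi> \<bullet> r' = \<xi> \<bullet> r" if "\<xi> \<in> Xi S lam" for \<xi>
    using Eset_idle[OF _ n, of \<xi>] that
    by (simp add: Xi_def Sstar_def r'_def inner_diff_right inner_axis)
  then have r'D: "r' \<in> Dfeas S lam q"
    using rD q by (auto simp: Dfeas_def nonneg_vec_def r'i)
  have "fvec f r' \<bullet> (r - r') < Lfun f r - Lfun f r'"
    using ne by (intro L_tangent_less Dfeas_nonneg[OF r'D] Dfeas_nonneg[OF rD])
      (auto simp: vec_eq_iff r'i)
  moreover have "fvec f r' \<bullet> (r - r') = 0"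
    by (simp add: r'_def inner_axis fvec_def f_zero)
  ultimately show False using r r'D by (auto simp: L_argmin_def)
qed

text \<open>lam is a max-weight schedule for the gradient f(r) at the minimiser: otherwise moving
  r slightly in the direction lam - pi (kept nonnegative on empty queues) stays feasible
  and decreases L to first order.\<close>
lemma argmin_max_weight:
  assumes q: "nonneg_vec q" and r: "L_argmin f (Dfeas S lam q) r" and \<pi>: "\<pi> \<in> S"
  shows "fvec f r \<bullet> \<pi> \<le> fvec f r \<bullet> lam"
proof (rule ccontr)
  assume not_max: "\<not> fvec f r \<bullet> \<pi> \<le> fvec f r \<bullet> lam"
  define w where "w = fvec f r"
  define d where "d = (\<chi> i. if r $ i = 0 then max ((lam - \<pi>) $ i) 0 else (lam - \<pi>) $ i)"
  have rD: "r \<in> Dfeas S lam q" using r by (simp add: L_argmin_def)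
  have r_nonneg: "nonneg_vec r" using Dfeas_nonneg[OF rD] .
  obtain t where t: "0 < t" "nonneg_vec (r + t *\<^sub>R d)"
    using small_step_nonneg[OF r_nonneg, of d] by (auto simp: d_def)
  have "\<xi> \<bullet> q \<le> \<xi> \<bullet> (r + t *\<^sub>R d)" if \<xi>: "\<xi> \<in> Xi S lam" for \<xi>
  proof -
    have \<xi>d: "\<xi> \<in> dual_poly S" using \<xi> Eset_dual_poly by (simp add: Xi_def Sstar_def)
    then have "0 \<le> \<xi> \<bullet> (lam - \<pi>)" using \<xi> \<pi> by (simp add: Xi_def dual_poly_def inner_diff_right)
    also have "\<dots> \<le> \<xi> \<bullet> d" using \<xi>d by (intro inner_vle_mono) (auto simp: dual_poly_def vle_def d_def)
    finally have "0 \<le> t * (\<xi> \<bullet> d)" using t(1) by simp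
    then have "\<xi> \<bullet> r \<le> \<xi> \<bullet> (r + t *\<^sub>R d)" by (simp add: inner_add_right)
    then show ?thesis using rD \<xi> by (auto simp: Dfeas_def)
  qed
  moreover have "(r + t *\<^sub>R d) $ i \<le> q $ i" if lam0: "lam $ i = 0" for i
  proof -
    have "d $ i \<le> 0" using lam0 S_coord_nonneg[OF \<pi>, of i] by (simp add: d_def)
    then have "(r + t *\<^sub>R d) $ i \<le> r $ i" using t(1) by (simp add: mult_nonneg_nonpos)
    then show ?thesis using rD lam0 by (auto simp: Dfeas_def)
  qed
  ultimately have "r + t *\<^sub>R d \<in> Dfeas S lam q"
    using t(2) by (simp add: Dfeas_def)
  then have "0 \<le> w \<bullet> ((r + t *\<^sub>R d) - r)"
    unfolding w_def by (rule Dfeas_argmin_variational[OF r])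
  moreover have "w \<bullet> d = w \<bullet> (lam - \<pi>)"
    unfolding inner_vec_def by (rule sum.cong) (auto simp: d_def w_def fvec_def f_zero)
  ultimately have "0 \<le> t * (w \<bullet> lam - w \<bullet> \<pi>)" by (simp add: inner_diff_right)
  then show False using t(1) not_max by (simp add: w_def zero_le_mult_iff)
qed

text \<open>The
  certificate lemma gives w' . q <= w' . r' on D(q); splitting w = u + eps w' with u again
  a certificate, the optimality of r at the point q gives w' . r <= w' . q.\<close>
lemma argmin_scaled_variational:
  assumes q: "nonneg_vec q" and r: "L_argmin f (Dfeas S lam q) r" and \<kappa>: "0 < \<kappa>"
    and r': "r' \<in> Dfeas S lam q"
  shows "0 \<le> fvec f (\<kappa> *\<^sub>R r) \<bullet> (r' - r)"
proof -
  define w where "w = fvec f r"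
  define w' where "w' = fvec f (\<kappa> *\<^sub>R r)"
  have rD: "r \<in> Dfeas S lam q" using r by (simp add: L_argmin_def)
  note supp = fvec_scaled_support[OF Dfeas_nonneg[OF rD] \<kappa>]
  have support: "w $ i = 0 \<longleftrightarrow> w' $ i = 0" for i using supp by (simp add: w_def w'_def)
  have w_max: "\<And>\<pi>. \<pi> \<in> S \<Longrightarrow> w \<bullet> \<pi> \<le> w \<bullet> lam"
    using argmin_max_weight[OF q r] by (simp add: w_def)
  have transfer: "\<forall>\<rho>\<in>S. \<rho> \<bullet> w' \<le> \<pi> \<bullet> w'" if "\<pi> \<in> S" "\<forall>\<rho>\<in>S. \<rho> \<bullet> w \<le> \<pi> \<bullet> w" for \<pi>
    using max_weight_scaling[OF Dfeas_nonneg[OF rD], of \<pi> \<kappa>] that \<kappa> by (simp add: w_def w'_def)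
  note w_nonneg = supp(4)[folded w_def] and w'_nonneg = supp(3)[folded w'_def]
  have idle_zero: "w $ n = 0" "w' $ n = 0" if "idle n" for n
    using argmin_idle[OF q r that] supp by (auto simp: w_def w'_def)
  note w'_max = max_weight_transfer(1)[OF w_nonneg w_max support transfer]
  note tight = max_weight_transfer(2)[OF w_nonneg w_max support transfer]
  obtain \<epsilon> where \<epsilon>: "0 < \<epsilon>" "nonneg_vec (w - \<epsilon> *\<^sub>R w')"
    "\<forall>\<pi>\<in>S. (w - \<epsilon> *\<^sub>R w') \<bullet> \<pi> \<le> (w - \<epsilon> *\<^sub>R w') \<bullet> lam"
    using max_weight_split[OF w_nonneg w_max support tight] by blast
  have "(w - \<epsilon> *\<^sub>R w') \<bullet> q \<le> (w - \<epsilon> *\<^sub>R w') \<bullet> r"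
    by (rule certificate[OF \<epsilon>(2) _ _ rD]) (use \<epsilon>(3) idle_zero in auto)
  moreover have "0 \<le> w \<bullet> (q - r)"
    using Dfeas_argmin_variational[OF r Dfeas_self[OF q]] by (simp add: w_def)
  ultimately have "\<epsilon> * (w' \<bullet> r) \<le> \<epsilon> * (w' \<bullet> q)" by (simp add: inner_diff_left inner_diff_right)
  then have "w' \<bullet> r \<le> w' \<bullet> q" using \<epsilon>(1) by (simp add: mult_le_cancel_left_pos)
  moreover have "w' \<bullet> q \<le> w' \<bullet> r'"
    by (rule certificate[OF w'_nonneg _ w'_max r']) (use idle_zero in auto)
  ultimately show ?thesis by (simp add: w'_def inner_diff_right)
qed

text \<open>Scaling the minimiser: kappa r minimises L over D(kappa q) = kappa D(q), by the
  tangent inequality at kappa r and the scaled variational inequality.\<close>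
lemma argmin_scale:
  assumes q: "nonneg_vec q" and r: "L_argmin f (Dfeas S lam q) r" and \<kappa>: "0 < \<kappa>"
  shows "L_argmin f (Dfeas S lam (\<kappa> *\<^sub>R q)) (\<kappa> *\<^sub>R r)"
proof -
  have \<kappa>r: "\<kappa> *\<^sub>R r \<in> Dfeas S lam (\<kappa> *\<^sub>R q)"
    unfolding Dfeas_scale[OF \<kappa>] using r by (simp add: L_argmin_def)
  have "Lfun f (\<kappa> *\<^sub>R r) \<le> Lfun f r''" if r'': "r'' \<in> Dfeas S lam (\<kappa> *\<^sub>R q)" for r''
  proof -
    define r' where "r' = (1/\<kappa>) *\<^sub>R r''"
    have r''_eq: "r'' = \<kappa> *\<^sub>R r'" using \<kappa> by (simp add: r'_def)
    have r'D: "r' \<in> Dfeas S lam q" using r'' unfolding r''_eq Dfeas_scale[OF \<kappa>] .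
    have "0 \<le> \<kappa> * (fvec f (\<kappa> *\<^sub>R r) \<bullet> (r' - r))"
      using argmin_scaled_variational[OF q r \<kappa> r'D] \<kappa> by simp
    also have "\<dots> = fvec f (\<kappa> *\<^sub>R r) \<bullet> (r'' - \<kappa> *\<^sub>R r)"
      by (simp add: r''_eq flip: scaleR_diff_right)
    also have "\<dots> \<le> Lfun f r'' - Lfun f (\<kappa> *\<^sub>R r)"
      by (rule L_tangent_le[OF Dfeas_nonneg[OF \<kappa>r] Dfeas_nonneg[OF r'']])
    finally show ?thesis by simp
  qed
  then show ?thesis using \<kappa>r by (simp add: L_argmin_def)
qed

end

theorem lemma5p9:
  fixes f :: "real \<Rightarrow> real" and S :: "(real^'n) set" and lam q :: "real^'n" and \<kappa> :: real
  assumes "finite S"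
    and "\<forall>\<pi>\<in>S. nonneg_vec \<pi>"
    and "admissible_f f S"
    and "lam \<in> Lambda S"
    and "nonneg_vec q"
    and "\<kappa> > 0"
  shows "Delta f S lam (\<kappa> *\<^sub>R q) = \<kappa> *\<^sub>R Delta f S lam q"
proof -
  have "single_hop_axioms S f" using assms(3) by unfold_locales (simp add: admissible_f_def)
  then interpret single_hop S lam f
    using capacity_region.intro[OF assms(1,2,4)] admissible_cost_function[OF assms(3)]
    by (intro single_hop.intro)
  obtain r where r: "L_argmin f (Dfeas S lam q) r"
    using Dfeas_argmin_exists[OF assms(5)] by blast
  have "Delta f S lam q = r" by (rule Delta_eqI[OF r])
  moreover have "Delta f S lam (\<kappa> *\<^sub>R q) = \<kappa> *\<^sub>R r"
    by (rule Delta_eqI[OF argmin_scale[OF assms(5) r assms(6)]])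
  ultimately show ?thesis by simp
qed

end
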